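(* Consider the following MIMO flat-fading model. Fix integers $l_{\mathrm t},l_{\mathrm r},n\ge 1$ and a known pilot matrix $S=[s_{t,k}]\in\mathbb{C}^{n\times l_{\mathrm t}}$. Let $\vec{\mathbf h}\in\mathbb{C}^{l_{\mathrm r}l_{\mathrm t}}$ (entries $h_{r,t}$) be circularly symmetric complex Gaussian $\mathcal{CN}(\vec\mu_{\vec{\mathbf h}},\Sigma_{\vec{\mathbf h}})$ with $\Sigma_{\vec{\mathbf h}}$ positive definite, let $\mathbf f_\delta\sim\mathcal N(\mu_{\mathbf f_\delta},\sigma_{\mathbf f_\delta}^2)$ be real, let the noise entries $n_{r,k}$ be i.i.d. $\mathcal{CN}(0,1)$, with $\vec{\mathbf h},\mathbf f_\delta,\vec{\mathbf n}$ mutually independent, and observe $\vec{\mathbf y}=\grave X(\mathbf f_\delta)\vec{\mathbf h}+\vec{\mathbf n}$, i.e. $y_{r,k}=e^{j2\pi \mathbf f_\delta (k-1)}\sum_{t=1}^{l_{\mathrm t}}s_{t,k}h_{r,t}+n_{r,k}$. Then for every observation $\vec y\in\mathbb{C}^{nl_{\mathrm r}}$, $$\arg\max_{f_\delta\in\mathbb R} f_{\vec{\mathbf y}|\mathbf f_\delta}(\vec y\,|\,f_\delta)\,f_{\mathbf f_\delta}(f_\delta)=\arg\max_{f_\delta\in\mathbb R} g(\vec y,f_\delta),$$ where $$g(\vec y,f_\delta)=2\,\mathrm{Re}\big[\langle \grave X(f_\delta)^\dagger\vec y,\vec b\rangle\big]+\big(\grave X(f_\delta)^\dagger\vec y\big)^\dagger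 A\big(\grave X(f_\delta)^\dagger\vec y\big)-\tfrac12\sigma_{\mathbf f_\delta}^{-2}\,|f_\delta-\mu_{\mathbf f_\delta}|^2 ,$$ with $A=(\grave S^\dagger\grave S+\Sigma_{\vec{\mathbf h}}^{-1})^{-1}$ (which equals $(\Sigma_{\vec{\mathbf h}}^{-1}+\frac{n\rho}{l_{\mathrm t}}I)^{-1}$ when $S^\dagger S=\frac{n\rho}{l_{\mathrm t}}I_{l_{\mathrm t}}$) and $\vec b=(I-A\grave X(f_\delta)^\dagger\grave X(f_\delta))\vec\mu_{\vec{\mathbf h}}=(I-A\grave S^\dagger\grave S)\vec\mu_{\vec{\mathbf h}}$; $A$ and $\vec b$ do not depend on $f_\delta$. Moreover, the maximum likelihood estimator $\arg\max_{f_\delta} f_{\vec{\mathbf y}|\mathbf f_\delta}(\vec y|f_\delta)$ is obtained by maximizing the same function $g$ with $\sigma_{\mathbf f_\delta}^{-2}$ set to $0$.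
   Context: Notation: $l_{\mathrm t}$ transmit antennas, $l_{\mathrm r}$ receive antennas, $n$ symbol times. $\vec{\mathbf h}$ stacks $h_{r,t}$ (channel from transmit antenna $t$ to receive antenna $r$) with $h_{r,t}$ in position $(r-1)l_{\mathrm t}+t$; $\vec{\mathbf y}$ and $\vec{\mathbf n}$ stack $y_{r,k},n_{r,k}$ with index $(r,k)$ in position $(r-1)n+k$. $\rho=\frac1n\mathrm{Tr}(S^\dagger S)$. $F(f)=\mathrm{diag}\big(e^{j2\pi f(k-1)}\big)_{k=1,\dots,n}$, $X(f)=F(f)S$, $\grave X(f)=I_{l_{\mathrm r}}\otimes X(f)$ (block diagonal with $l_{\mathrm r}$ copies of $X(f)$), $\grave S=I_{l_{\mathrm r}}\otimes S$. $f_{\vec{\mathbf y}|\mathbf f_\delta}$ is the conditional density of $\vec{\mathbf y}$ given $\mathbf f_\delta$ and $f_{\mathbf f_\delta}$ the Gaussian prior density of $\mathbf f_\delta$. $\langle u,v\rangle=v^\dagger u$; $\dagger$ denotes conjugate transpose. *)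

theory Defs
  imports "Jordan_Normal_Form.Schur_Decomposition" "Jordan_Normal_Form.Gauss_Jordan_Elimination"
begin

definition minv :: "complex mat \<Rightarrow> complex mat" where
  "minv M = the (mat_inverse M)"

definition herm_pd :: "nat \<Rightarrow> complex mat \<Rightarrow> bool" where
  "herm_pd d M \<longleftrightarrow> M \<in> carrier_mat d d \<and> mat_adjoint M = M \<and>
     (\<forall>v \<in> carrier_vec d. v \<noteq> 0\<^sub>v d \<longrightarrow> 0 < Re ((M *\<^sub>v v) \<bullet>c v))"

(* F(f) = diag(exp(j 2 pi f (k-1))), k = 1..n  (0-based index k here) *)
definition Fmat :: "nat \<Rightarrow> real \<Rightarrow> complex mat" where
  "Fmat n f = mat n n (\<lambda>(i,j). if i = j then cis (2 * pi * f * real i) else 0)"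

definition Xmat :: "complex mat \<Rightarrow> real \<Rightarrow> complex mat" where
  "Xmat S f = Fmat (dim_row S) f * S"

(* I_{l} \<otimes> M : block diagonal with l copies of M *)
definition blkdiag :: "nat \<Rightarrow> complex mat \<Rightarrow> complex mat" where
  "blkdiag l M = mat (l * dim_row M) (l * dim_col M)
     (\<lambda>(i,j). if i div dim_row M = j div dim_col M
              then M $$ (i mod dim_row M, j mod dim_col M) else 0)"

definition cn_density :: "complex vec \<Rightarrow> complex mat \<Rightarrow> complex vec \<Rightarrow> real" where
  "cn_density m C y = exp (- Re ((minv C *\<^sub>v (y - m)) \<bullet>c (y - m)))
                      / (pi ^ dim_vec y * Re (det C))"

(* conditional density of y given f_delta: under the model y = Xgrave(f) h + n with
   h ~ CN(mu_h, Sigma_h), n ~ CN(0, I) independent, y | f ~ CN(Xgrave mu_h, Xgrave Sigma Xgrave^H + I) *)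
definition lik :: "nat \<Rightarrow> complex mat \<Rightarrow> complex vec \<Rightarrow> complex mat \<Rightarrow> complex vec \<Rightarrow> real \<Rightarrow> real" where
  "lik lr S muh Sig y f =
     (let Xg = blkdiag lr (Xmat S f) in
      cn_density (Xg *\<^sub>v muh) (Xg * Sig * mat_adjoint Xg + 1\<^sub>m (lr * dim_row S)) y)"

definition Amat :: "nat \<Rightarrow> complex mat \<Rightarrow> complex mat \<Rightarrow> complex mat" where
  "Amat lr S Sig = minv (mat_adjoint (blkdiag lr S) * blkdiag lr S + minv Sig)"

definition bvec :: "nat \<Rightarrow> complex mat \<Rightarrow> complex vec \<Rightarrow> complex mat \<Rightarrow> real \<Rightarrow> complex vec" where
  "bvec lr S muh Sig f =
     (let Xg = blkdiag lr (Xmat S f) in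
      (1\<^sub>m (lr * dim_col S) - Amat lr S Sig * (mat_adjoint Xg * Xg)) *\<^sub>v muh)"

(* g(y, f) with tau playing the role of sigma_f^{-2} *)
definition gfun :: "nat \<Rightarrow> complex mat \<Rightarrow> complex vec \<Rightarrow> complex mat \<Rightarrow> real \<Rightarrow> real
                    \<Rightarrow> complex vec \<Rightarrow> real \<Rightarrow> real" where
  "gfun lr S muh Sig tau muf y f =
     (let z = mat_adjoint (blkdiag lr (Xmat S f)) *\<^sub>v y in
      2 * Re (z \<bullet>c bvec lr S muh Sig f) + Re ((Amat lr S Sig *\<^sub>v z) \<bullet>c z)
      - tau / 2 * \<bar>f - muf\<bar>\<^sup>2)"

definition normal_pdf :: "real \<Rightarrow> real \<Rightarrow> real \<Rightarrow> real" where
  "normal_pdf mu sigma x = 1 / sqrt (2 * pi * sigma\<^sup>2) * exp (-(x - mu)\<^sup>2 / (2 * sigma\<^sup>2))"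

definition argmax_set :: "(real \<Rightarrow> real) \<Rightarrow> real set" where
  "argmax_set h = {x. \<forall>z. h z \<le> h x}"

end

theory Submission
  imports Defs
begin

text \<open>
  Write \<open>X(f) = D(f) (I \<otimes> S)\<close> with \<open>D(f) = I \<otimes> F(f)\<close> unitary. Given \<open>f\<close>, the observation is
  \<open>CN(X \<mu>, C)\<close> with \<open>C = X \<Sigma> X\<^sup>H + I\<close>. Unitarity of \<open>D(f)\<close> makes \<open>X\<^sup>H X\<close> and
  \<open>det C\<close> independent of \<open>f\<close>, and the Woodbury identity
  \<open>C\<^sup>-\<^sup>1 = I - X A X\<^sup>H\<close>, \<open>A = (X\<^sup>H X + \<Sigma>\<^sup>-\<^sup>1)\<^sup>-\<^sup>1\<close>, turns the exponent
  \<open>-(y - X \<mu>)\<^sup>H C\<^sup>-\<^sup>1 (y - X \<mu>)\<close> into \<open>g(y, f)\<close> minus a constant. So the likelihood is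
  \<open>c \<cdot> exp (g(y, f))\<close> with \<open>c > 0\<close> independent of \<open>f\<close>; the Gaussian prior only adds the
  penalty \<open>-(f - \<mu>\<^sub>f)\<^sup>2 / (2 \<sigma>\<^sub>f\<^sup>2)\<close> to the exponent, and \<open>exp\<close> preserves maximizers.
\<close>

section \<open>Conjugate transpose\<close>

lemma mat_adjoint_conv:
  fixes A :: "complex mat"
  shows "mat_adjoint A = mat (dim_col A) (dim_row A) (\<lambda>(i, j). cnj (A $$ (j, i)))"
  unfolding mat_adjoint_def by (rule eq_matI) (auto simp: mat_of_rows_def)

lemma dim_row_mat_adjoint[simp]: "dim_row (mat_adjoint (A :: complex mat)) = dim_col A"
  and dim_col_mat_adjoint[simp]: "dim_col (mat_adjoint (A :: complex mat)) = dim_row A"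
  by (simp_all add: mat_adjoint_conv)

lemma index_mat_adjoint[simp]:
  "i < dim_col A \<Longrightarrow> j < dim_row A \<Longrightarrow> mat_adjoint (A :: complex mat) $$ (i, j) = cnj (A $$ (j, i))"
  by (simp add: mat_adjoint_conv)

lemma mat_adjoint_carrier[simp]:
  "(A :: complex mat) \<in> carrier_mat m n \<Longrightarrow> mat_adjoint A \<in> carrier_mat n m"
  by auto

lemma mat_adjoint_mat_adjoint[simp]: "mat_adjoint (mat_adjoint (A :: complex mat)) = A"
  by (rule eq_matI) auto

lemma mat_adjoint_mult:
  fixes A B :: "complex mat"
  assumes "dim_col A = dim_row B"
  shows "mat_adjoint (A * B) = mat_adjoint B * mat_adjoint A"
  using assms by (intro eq_matI) (auto simp: scalar_prod_def mult.commute)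

lemma mat_adjoint_add:
  fixes A B :: "complex mat"
  assumes "dim_row A = dim_row B" "dim_col A = dim_col B"
  shows "mat_adjoint (A + B) = mat_adjoint A + mat_adjoint B"
  using assms by (intro eq_matI) auto

lemma mat_adjoint_one[simp]: "mat_adjoint (1\<^sub>m n :: complex mat) = 1\<^sub>m n"
  by (rule eq_matI) auto

lemma assoc_mult_mat':
  "dim_col A = dim_row B \<Longrightarrow> dim_col B = dim_row C \<Longrightarrow> A * B * C = A * (B * C)"
  by (rule assoc_mult_mat[of A "dim_row A" "dim_col A" B "dim_col B" C "dim_col C"]) auto

lemma mult_add_distrib_mat':
  "dim_col A = dim_row B \<Longrightarrow> dim_row B = dim_row C \<Longrightarrow> dim_col B = dim_col C \<Longrightarrow>
   A * (B + C) = A * B + A * C"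
  by (rule mult_add_distrib_mat[of A "dim_row A" "dim_col A" B "dim_col B"]) auto

lemma add_mult_distrib_mat':
  "dim_col A = dim_row C \<Longrightarrow> dim_row A = dim_row B \<Longrightarrow> dim_col A = dim_col B \<Longrightarrow>
   (A + B) * C = A * C + B * C"
  by (rule add_mult_distrib_mat[of A "dim_row A" "dim_col A" B C "dim_col C"]) auto

lemma mult_minus_distrib_mat':
  fixes A B C :: "'a :: ring mat"
  shows "dim_col A = dim_row B \<Longrightarrow> dim_row B = dim_row C \<Longrightarrow> dim_col B = dim_col C \<Longrightarrow>
   A * (B - C) = A * B - A * C"
  by (rule mult_minus_distrib_mat[of A "dim_row A" "dim_col A" B "dim_col B"]) auto

lemma assoc_mult_mat_vec':
  "dim_col A = dim_row B \<Longrightarrow> dim_col B = dim_vec v \<Longrightarrow> (A * B) *\<^sub>v v = A *\<^sub>v (B *\<^sub>v v)"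
  by (rule assoc_mult_mat_vec[of A "dim_row A" "dim_col A" B "dim_col B"]) auto

lemma mult_mat_vec_carrier'[simp]: "dim_row A = k \<Longrightarrow> A *\<^sub>v v \<in> carrier_vec k"
  by (rule carrier_vecI) simp

lemma cscalar_prod_conv_sum:
  fixes v w :: "complex vec"
  shows "dim_vec v = dim_vec w \<Longrightarrow> v \<bullet>c w = (\<Sum>i<dim_vec v. v $ i * cnj (w $ i))"
  by (simp add: scalar_prod_def atLeast0LessThan)

lemma cscalar_prod_swap:
  fixes v w :: "complex vec"
  shows "dim_vec v = dim_vec w \<Longrightarrow> v \<bullet>c w = cnj (w \<bullet>c v)"
  by (simp add: cscalar_prod_conv_sum mult.commute)

lemma Re_cscalar_prod_swap:
  fixes v w :: "complex vec"
  shows "dim_vec v = dim_vec w \<Longrightarrow> Re (v \<bullet>c w) = Re (w \<bullet>c v)"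
  by (simp add: cscalar_prod_swap[of v w])

lemma cscalar_prod_mat_adjoint:
  fixes A :: "complex mat" and u w :: "complex vec"
  assumes A: "A \<in> carrier_mat m n" and u: "u \<in> carrier_vec n" and w: "w \<in> carrier_vec m"
  shows "(A *\<^sub>v u) \<bullet>c w = u \<bullet>c (mat_adjoint A *\<^sub>v w)"
proof -
  have "(A *\<^sub>v u) \<bullet>c w = (\<Sum>i<m. \<Sum>j<n. A $$ (i, j) * u $ j * cnj (w $ i))"
    using A u w by (simp add: cscalar_prod_conv_sum scalar_prod_def atLeast0LessThan sum_distrib_right)
  also have "\<dots> = (\<Sum>j<n. \<Sum>i<m. A $$ (i, j) * u $ j * cnj (w $ i))"
    by (rule sum.swap)
  also have "\<dots> = u \<bullet>c (mat_adjoint A *\<^sub>v w)"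
    using A u w by (simp add: cscalar_prod_conv_sum scalar_prod_def atLeast0LessThan
        sum_distrib_left mult_ac)
  finally show ?thesis .
qed

lemma Re_cscalar_prod_self_nonneg: "0 \<le> Re (v \<bullet>c (v :: complex vec))"
  using conjugate_square_ge_0_vec[of v] by (simp add: less_eq_complex_def)

lemma minus_cscalar_prod_distrib:
  fixes u v w :: "complex vec"
  assumes "u \<in> carrier_vec k" "v \<in> carrier_vec k" "w \<in> carrier_vec k"
  shows "(u - v) \<bullet>c w = u \<bullet>c w - v \<bullet>c w"
  using assms by (simp add: minus_scalar_prod_distrib[of u k v])

lemma cscalar_prod_minus_distrib:
  fixes u v w :: "complex vec"
  assumes "u \<in> carrier_vec k" "v \<in> carrier_vec k" "w \<in> carrier_vec k"
  shows "w \<bullet>c (u - v) = w \<bullet>c u - w \<bullet>c v"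
proof -
  have "conjugate (u - v) = conjugate u - conjugate v"
    using assms by (intro eq_vecI) auto
  then show ?thesis
    using assms by (simp add: scalar_prod_minus_distrib[of w k])
qed

lemma Re_hermitian_form_diff:
  fixes M :: "complex mat" and a b :: "complex vec"
  assumes M: "M \<in> carrier_mat k k" "mat_adjoint M = M"
    and a: "a \<in> carrier_vec k" and b: "b \<in> carrier_vec k"
  shows "Re ((M *\<^sub>v (a - b)) \<bullet>c (a - b))
       = Re ((M *\<^sub>v a) \<bullet>c a) - 2 * Re ((M *\<^sub>v b) \<bullet>c a) + Re ((M *\<^sub>v b) \<bullet>c b)"
proof -
  have "Re ((M *\<^sub>v a) \<bullet>c b) = Re ((M *\<^sub>v b) \<bullet>c a)"
    using M a b by (simp add: cscalar_prod_mat_adjoint[of M k k a b] Re_cscalar_prod_swap)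
  moreover have "M *\<^sub>v (a - b) = M *\<^sub>v a - M *\<^sub>v b"
    using M a b by (simp add: mult_minus_distrib_mat_vec)
  ultimately show ?thesis
    using M a b by (simp add: minus_cscalar_prod_distrib[of _ k] cscalar_prod_minus_distrib[of _ k])
qed

lemma Im_hermitian_form:
  fixes M :: "complex mat"
  assumes M: "M \<in> carrier_mat k k" "mat_adjoint M = M" and v: "v \<in> carrier_vec k"
  shows "Im ((M *\<^sub>v v) \<bullet>c v) = 0"
proof -
  have "(M *\<^sub>v v) \<bullet>c v = cnj ((M *\<^sub>v v) \<bullet>c v)"
    using cscalar_prod_mat_adjoint[OF M(1) v v] M v by (simp add: cscalar_prod_swap[of v])
  then show ?thesis by (metis Reals_cnj_iff complex_is_Real_iff)
qed

section \<open>Inverses and Hermitian positive definite matrices\<close>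

lemma minv_inverse:
  fixes A :: "complex mat"
  assumes A: "A \<in> carrier_mat n n" and det: "det A \<noteq> 0"
  shows "minv A \<in> carrier_mat n n" "A * minv A = 1\<^sub>m n" "minv A * A = 1\<^sub>m n"
proof -
  have "mat_inverse A \<noteq> None"
    using mat_inverse(1)[OF A, of undefined] det_non_zero_imp_unit[OF A det, of undefined] by blast
  then obtain B where "mat_inverse A = Some B" by blast
  with mat_inverse(2)[OF A] show "minv A \<in> carrier_mat n n" "A * minv A = 1\<^sub>m n" "minv A * A = 1\<^sub>m n"
    by (auto simp: minv_def)
qed

lemma minv_eqI:
  fixes A B :: "complex mat"
  assumes A: "A \<in> carrier_mat n n" and B: "B \<in> carrier_mat n n" and AB: "A * B = 1\<^sub>m n"
  shows "minv A = B"
proof -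
  have "det A * det B = 1"
    using det_mult[OF A B] AB by simp
  then have "det A \<noteq> 0" by auto
  note inv = minv_inverse[OF A this]
  have "minv A = minv A * (A * B)"
    using inv AB by simp
  also have "\<dots> = (minv A * A) * B"
    by (rule assoc_mult_mat[symmetric, OF inv(1) A B])
  also have "\<dots> = B"
    using inv B by simp
  finally show ?thesis .
qed

lemma minv_hermitian:
  fixes A :: "complex mat"
  assumes A: "A \<in> carrier_mat n n" "mat_adjoint A = A" and det: "det A \<noteq> 0"
  shows "mat_adjoint (minv A) = minv A"
proof -
  note inv = minv_inverse[OF A(1) det]
  have "A * mat_adjoint (minv A) = mat_adjoint (minv A * A)"
    using carrier_matD[OF inv(1)] carrier_matD[OF A(1)] A(2) by (simp add: mat_adjoint_mult)
  then have "A * mat_adjoint (minv A) = 1\<^sub>m n"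
    by (metis inv(3) mat_adjoint_one)
  then have "minv A = mat_adjoint (minv A)"
    using inv(1) by (intro minv_eqI[OF A(1)]) simp_all
  then show ?thesis
    by simp
qed

lemma herm_pd_carrier: "herm_pd d M \<Longrightarrow> M \<in> carrier_mat d d"
  and herm_pd_hermitian: "herm_pd d M \<Longrightarrow> mat_adjoint M = M"
  and herm_pd_pos: "herm_pd d M \<Longrightarrow> v \<in> carrier_vec d \<Longrightarrow> v \<noteq> 0\<^sub>v d \<Longrightarrow> 0 < Re ((M *\<^sub>v v) \<bullet>c v)"
  by (simp_all add: herm_pd_def)

lemma herm_pd_nonneg:
  assumes "herm_pd d M" "v \<in> carrier_vec d"
  shows "0 \<le> Re ((M *\<^sub>v v) \<bullet>c v)"
  using assms herm_pd_pos[OF assms] by (cases "v = 0\<^sub>v d") (auto simp: scalar_prod_def)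

lemma herm_pd_eigenvalue_pos:
  assumes pd: "herm_pd d M" and ev: "eigenvalue M a"
  shows "Im a = 0 \<and> 0 < Re a"
proof -
  note M = herm_pd_carrier[OF pd] herm_pd_hermitian[OF pd]
  obtain v where v: "v \<in> carrier_vec d" "v \<noteq> 0\<^sub>v d" "M *\<^sub>v v = a \<cdot>\<^sub>v v"
    using ev M unfolding eigenvalue_def eigenvector_def by auto
  have "Im (v \<bullet>c v) = 0" "0 < Re (v \<bullet>c v)"
    using conjugate_square_greater_0_vec[OF v(1)] v(2) by (auto simp: less_complex_def)
  moreover have "Im (a * (v \<bullet>c v)) = 0" "0 < Re (a * (v \<bullet>c v))"
    using Im_hermitian_form[OF M v(1)] herm_pd_pos[OF pd v(1,2)] v by auto
  ultimately show ?thesis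
    by (auto simp: zero_less_mult_iff)
qed

lemma herm_pd_det_pos:
  assumes pd: "herm_pd d M"
  shows "0 < Re (det M)"
proof -
  note M = herm_pd_carrier[OF pd]
  obtain as where cp: "char_poly M = (\<Prod>a\<leftarrow>as. [:- a, 1:])" and len: "length as = d"
    using char_poly_factorized[OF M] by blast
  have roots: "Im a = 0 \<and> 0 < Re a" if "a \<in> set as" for a
  proof (rule herm_pd_eigenvalue_pos[OF pd])
    show "eigenvalue M a"
      using that by (simp add: eigenvalue_root_char_poly[OF M] cp poly_prod_list prod_list_zero_iff)
  qed
  \<comment> \<open>\<open>det M\<close> is the product of the roots of the characteristic polynomial, all positive eigenvalues.\<close>
  have "char_matrix M 0 = M"
    using M by (intro eq_matI) (auto simp: char_matrix_def)
  moreover have "- M = (-1) \<cdot>\<^sub>m M"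
    by (rule eq_matI) auto
  ultimately have "(-1) ^ d * det M = poly (char_poly M) 0"
    using char_poly_matrix[OF M, of 0] M by simp
  also have "\<dots> = (\<Prod>a\<leftarrow>as. - a)"
    by (simp add: cp poly_prod_list o_def)
  also have "\<dots> = (-1) ^ d * prod_list as"
    using len by (induct as arbitrary: d) auto
  finally have "det M = prod_list as"
    by simp
  moreover have "Im (prod_list bs) = 0 \<and> 0 < Re (prod_list bs)" if "set bs \<subseteq> set as" for bs
    using that roots by (induct bs) auto
  ultimately show ?thesis
    by simp
qed

lemma herm_pd_det_nonzero: "herm_pd d M \<Longrightarrow> det M \<noteq> 0"
  using herm_pd_det_pos by fastforce

lemma herm_pd_mult_minv: "herm_pd d M \<Longrightarrow> M * minv M = 1\<^sub>m d"
  using minv_inverse(2)[OF herm_pd_carrier herm_pd_det_nonzero] by blast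

lemma herm_pd_minv:
  assumes pd: "herm_pd d M"
  shows "herm_pd d (minv M)"
  unfolding herm_pd_def
proof (intro conjI ballI impI)
  note M = herm_pd_carrier[OF pd] herm_pd_hermitian[OF pd]
  note inv = minv_inverse[OF M(1) herm_pd_det_nonzero[OF pd]]
  show "minv M \<in> carrier_mat d d" "mat_adjoint (minv M) = minv M"
    using inv(1) minv_hermitian[OF M herm_pd_det_nonzero[OF pd]] .
  fix v :: "complex vec"
  assume v: "v \<in> carrier_vec d" "v \<noteq> 0\<^sub>v d"
  define w where "w = minv M *\<^sub>v v"
  have w: "w \<in> carrier_vec d"
    using inv(1) v(1) by (simp add: w_def)
  have Mw: "M *\<^sub>v w = v"
    using inv M v(1) by (simp add: w_def assoc_mult_mat_vec[symmetric, of M d d "minv M" d])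
  then have "w \<noteq> 0\<^sub>v d"
    using M(1) v(2) by auto
  moreover have "(minv M *\<^sub>v v) \<bullet>c v = cnj ((M *\<^sub>v w) \<bullet>c w)"
    using Mw w v by (simp add: w_def[symmetric] cscalar_prod_swap[of w])
  ultimately show "0 < Re ((minv M *\<^sub>v v) \<bullet>c v)"
    using herm_pd_pos[OF pd w] by simp
qed

lemma herm_pd_add_gram:
  assumes pd: "herm_pd d P" and X: "X \<in> carrier_mat m d"
  shows "herm_pd d (mat_adjoint X * X + P)"
  unfolding herm_pd_def
proof (intro conjI ballI impI)
  note P = herm_pd_carrier[OF pd] herm_pd_hermitian[OF pd]
  show "mat_adjoint X * X + P \<in> carrier_mat d d"
    using X P by auto
  show "mat_adjoint (mat_adjoint X * X + P) = mat_adjoint X * X + P"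
    using X P by (simp add: mat_adjoint_add mat_adjoint_mult)
  fix v :: "complex vec"
  assume v: "v \<in> carrier_vec d" "v \<noteq> 0\<^sub>v d"
  have "(mat_adjoint X * X + P) *\<^sub>v v = (mat_adjoint X * X) *\<^sub>v v + P *\<^sub>v v"
    using X P v by (intro add_mult_distrib_mat_vec) auto
  also have "(mat_adjoint X * X) *\<^sub>v v = mat_adjoint X *\<^sub>v (X *\<^sub>v v)"
    using X v by (intro assoc_mult_mat_vec) auto
  finally have "(mat_adjoint X * X + P) *\<^sub>v v = mat_adjoint X *\<^sub>v (X *\<^sub>v v) + P *\<^sub>v v" .
  moreover have "(mat_adjoint X *\<^sub>v (X *\<^sub>v v)) \<bullet>c v = (X *\<^sub>v v) \<bullet>c (X *\<^sub>v v)"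
    using X v by (simp add: cscalar_prod_mat_adjoint[of "mat_adjoint X" d m])
  ultimately have "((mat_adjoint X * X + P) *\<^sub>v v) \<bullet>c v = (X *\<^sub>v v) \<bullet>c (X *\<^sub>v v) + (P *\<^sub>v v) \<bullet>c v"
    using X P v by (simp add: add_scalar_prod_distrib[of _ d])
  then show "0 < Re (((mat_adjoint X * X + P) *\<^sub>v v) \<bullet>c v)"
    using Re_cscalar_prod_self_nonneg[of "X *\<^sub>v v"] herm_pd_pos[OF pd v] by simp
qed

lemma herm_pd_congruence_add_one:
  assumes pd: "herm_pd d Sig" and X: "X \<in> carrier_mat m d"
  shows "herm_pd m (X * Sig * mat_adjoint X + 1\<^sub>m m)"
  unfolding herm_pd_def
proof (intro conjI ballI impI)
  note Sig = herm_pd_carrier[OF pd] herm_pd_hermitian[OF pd]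
  show "X * Sig * mat_adjoint X + 1\<^sub>m m \<in> carrier_mat m m"
    using X Sig by auto
  show "mat_adjoint (X * Sig * mat_adjoint X + 1\<^sub>m m) = X * Sig * mat_adjoint X + 1\<^sub>m m"
    using X Sig by (simp add: mat_adjoint_add mat_adjoint_mult assoc_mult_mat')
  fix v :: "complex vec"
  assume v: "v \<in> carrier_vec m" "v \<noteq> 0\<^sub>v m"
  define w where "w = mat_adjoint X *\<^sub>v v"
  have w: "w \<in> carrier_vec d"
    using X by (simp add: w_def)
  have "(X * Sig * mat_adjoint X + 1\<^sub>m m) *\<^sub>v v = (X * Sig * mat_adjoint X) *\<^sub>v v + v"
    using X Sig v by (subst add_mult_distrib_mat_vec[of _ m m]) auto
  also have "(X * Sig * mat_adjoint X) *\<^sub>v v = X *\<^sub>v (Sig *\<^sub>v w)"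
    using carrier_matD[OF X] carrier_matD[OF Sig(1)] carrier_vecD[OF v(1)] by (simp add: w_def assoc_mult_mat_vec')
  finally have "((X * Sig * mat_adjoint X + 1\<^sub>m m) *\<^sub>v v) \<bullet>c v = (X *\<^sub>v (Sig *\<^sub>v w)) \<bullet>c v + v \<bullet>c v"
    using X v by (simp add: add_scalar_prod_distrib[of _ m])
  also have "(X *\<^sub>v (Sig *\<^sub>v w)) \<bullet>c v = (Sig *\<^sub>v w) \<bullet>c w"
    using X Sig v by (simp add: w_def cscalar_prod_mat_adjoint[of X m d])
  finally have "((X * Sig * mat_adjoint X + 1\<^sub>m m) *\<^sub>v v) \<bullet>c v = (Sig *\<^sub>v w) \<bullet>c w + v \<bullet>c v" .
  moreover have "0 < Re (v \<bullet>c v)"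
    using conjugate_square_greater_0_vec[OF v(1)] v(2) by (simp add: less_complex_def)
  ultimately show "0 < Re (((X * Sig * mat_adjoint X + 1\<^sub>m m) *\<^sub>v v) \<bullet>c v)"
    using herm_pd_nonneg[OF pd w] by simp
qed

section \<open>Block-diagonal and phase-rotation matrices\<close>

lemma dim_row_blkdiag[simp]: "dim_row (blkdiag l M) = l * dim_row M"
  and dim_col_blkdiag[simp]: "dim_col (blkdiag l M) = l * dim_col M"
  by (simp_all add: blkdiag_def)

lemma blkdiag_carrier[simp]:
  assumes "M \<in> carrier_mat r c"
  shows "blkdiag l M \<in> carrier_mat (l * r) (l * c)"
  using carrier_matD[OF assms] by (intro carrier_matI) simp_all

lemma index_blkdiag:
  "i < l * dim_row M \<Longrightarrow> j < l * dim_col M \<Longrightarrow> blkdiag l M $$ (i, j) =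
     (if i div dim_row M = j div dim_col M then M $$ (i mod dim_row M, j mod dim_col M) else 0)"
  by (simp add: blkdiag_def)

lemma sum_lessThan_mult_blocks:
  fixes l m :: nat
  shows "(\<Sum>j<l * m. g j) = (\<Sum>b<l. \<Sum>j<m. g (b * m + j))"
proof -
  have "(\<Sum>j<l * m. g j) = (\<Sum>b<l. sum g {b * m..<b * m + m})"
    by (rule sum.nat_group[symmetric])
  also have "\<dots> = (\<Sum>b<l. \<Sum>j<m. g (b * m + j))"
    by (simp add: sum.shift_bounds_nat_ivl[of g 0 "b * m" m for b, simplified] atLeast0LessThan add.commute)
  finally show ?thesis .
qed

lemma mult_add_less_mult:
  fixes b j l m :: nat
  assumes "b < l" "j < m"
  shows "b * m + j < l * m"
proof -
  have "b * m + j < Suc b * m"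
    using assms by simp
  also have "\<dots> \<le> l * m"
    using assms by (intro mult_le_mono1) simp
  finally show ?thesis .
qed

lemma blkdiag_mult:
  assumes AB: "dim_col A = dim_row B"
  shows "blkdiag l A * blkdiag l B = blkdiag l (A * B)"
proof (rule eq_matI)
  fix i k
  assume "i < dim_row (blkdiag l (A * B))" "k < dim_col (blkdiag l (A * B))"
  then have i: "i < l * dim_row A" and k: "k < l * dim_col B"
    by simp_all
  define r m c where "r = dim_row A" and "m = dim_col A" and "c = dim_col B"
  have "0 < r" "0 < c" "i div r < l"
    using i k by (auto simp: r_def c_def less_mult_imp_div_less intro: Nat.gr0I)
  have entry: "blkdiag l A $$ (i, b * m + j) * blkdiag l B $$ (b * m + j, k) =
      (if b = i div r then (if i div r = k div c then A $$ (i mod r, j) * B $$ (j, k mod c) else 0) else 0)"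
    if "b < l" "j < m" for b j
    using that i k AB mult_add_less_mult[OF that] by (auto simp: index_blkdiag r_def m_def c_def)
  have "(blkdiag l A * blkdiag l B) $$ (i, k) = (\<Sum>j<l * m. blkdiag l A $$ (i, j) * blkdiag l B $$ (j, k))"
    using i k AB by (simp add: m_def scalar_prod_def atLeast0LessThan)
  also have "\<dots> = (\<Sum>b<l. if b = i div r
      then (\<Sum>j<m. if i div r = k div c then A $$ (i mod r, j) * B $$ (j, k mod c) else 0) else 0)"
    unfolding sum_lessThan_mult_blocks
  proof (rule sum.cong[OF refl])
    fix b
    assume "b \<in> {..<l}"
    then show "(\<Sum>j<m. blkdiag l A $$ (i, b * m + j) * blkdiag l B $$ (b * m + j, k)) = (if b = i div r
      then (\<Sum>j<m. if i div r = k div c then A $$ (i mod r, j) * B $$ (j, k mod c) else 0) else 0)"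
      by (cases "b = i div r") (simp_all add: entry)
  qed
  also have "\<dots> = (\<Sum>j<m. if i div r = k div c then A $$ (i mod r, j) * B $$ (j, k mod c) else 0)"
    using \<open>i div r < l\<close> by (simp add: sum.delta)
  also have "\<dots> = blkdiag l (A * B) $$ (i, k)"
    using i k AB \<open>0 < r\<close> \<open>0 < c\<close>
    by (cases "i div r = k div c") (simp_all add: index_blkdiag r_def m_def c_def scalar_prod_def atLeast0LessThan)
  finally show "(blkdiag l A * blkdiag l B) $$ (i, k) = blkdiag l (A * B) $$ (i, k)" .
qed (use AB in simp_all)

lemma mat_adjoint_blkdiag: "mat_adjoint (blkdiag l A) = blkdiag l (mat_adjoint A)"
proof (rule eq_matI)
  fix i j
  assume "i < dim_row (blkdiag l (mat_adjoint A))" "j < dim_col (blkdiag l (mat_adjoint A))"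
  moreover from this have "0 < dim_col A" "0 < dim_row A"
    by (auto intro: Nat.gr0I)
  ultimately show "mat_adjoint (blkdiag l A) $$ (i, j) = blkdiag l (mat_adjoint A) $$ (i, j)"
    by (auto simp: index_blkdiag)
qed simp_all

lemma blkdiag_one: "blkdiag l (1\<^sub>m m) = 1\<^sub>m (l * m)"
proof (rule eq_matI)
  fix i j
  assume ij: "i < dim_row (1\<^sub>m (l * m) :: complex mat)" "j < dim_col (1\<^sub>m (l * m) :: complex mat)"
  then have "0 < m"
    by (auto intro: Nat.gr0I)
  moreover have "(i div m = j div m \<and> i mod m = j mod m) \<longleftrightarrow> i = j"
    by (metis div_mult_mod_eq)
  ultimately show "blkdiag l (1\<^sub>m m) $$ (i, j) = (1\<^sub>m (l * m) :: complex mat) $$ (i, j)"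
    using ij by (auto simp: index_blkdiag)
qed simp_all

lemma blkdiag_smult: "blkdiag l (a \<cdot>\<^sub>m M) = a \<cdot>\<^sub>m blkdiag l M"
proof (rule eq_matI)
  fix i j
  assume "i < dim_row (a \<cdot>\<^sub>m blkdiag l M)" "j < dim_col (a \<cdot>\<^sub>m blkdiag l M)"
  moreover from this have "0 < dim_col M" "0 < dim_row M"
    by (auto intro: Nat.gr0I)
  ultimately show "blkdiag l (a \<cdot>\<^sub>m M) $$ (i, j) = (a \<cdot>\<^sub>m blkdiag l M) $$ (i, j)"
    by (auto simp: index_blkdiag)
qed simp_all

lemma dim_row_Fmat[simp]: "dim_row (Fmat n f) = n"
  and dim_col_Fmat[simp]: "dim_col (Fmat n f) = n"
  and index_Fmat: "i < n \<Longrightarrow> j < n \<Longrightarrow> Fmat n f $$ (i, j) = (if i = j then cis (2 * pi * f * real i) else 0)"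
  by (simp_all add: Fmat_def)

lemma Fmat_carrier[simp]: "Fmat n f \<in> carrier_mat n n"
  by (simp add: carrier_matI)

lemma mat_adjoint_Fmat_mult: "mat_adjoint (Fmat n f) * Fmat n f = 1\<^sub>m n"
proof (rule eq_matI)
  fix i j
  assume ij: "i < dim_row (1\<^sub>m n :: complex mat)" "j < dim_col (1\<^sub>m n :: complex mat)"
  have "(mat_adjoint (Fmat n f) * Fmat n f) $$ (i, j) =
      (\<Sum>k\<in>{0..<n}. cnj (Fmat n f $$ (k, i)) * Fmat n f $$ (k, j))"
    using ij by (simp add: scalar_prod_def)
  also have "\<dots> = (\<Sum>k\<in>{0..<n}. if k = i then (if i = j then 1 else 0) else 0)"
    using ij by (intro sum.cong refl) (auto simp: index_Fmat cis_cnj cis_mult)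
  also have "\<dots> = (1\<^sub>m n :: complex mat) $$ (i, j)"
    using ij by simp
  finally show "(mat_adjoint (Fmat n f) * Fmat n f) $$ (i, j) = (1\<^sub>m n :: complex mat) $$ (i, j)" .
qed simp_all

lemma unitary_blkdiag_Fmat:
  "mat_adjoint (blkdiag l (Fmat n f)) * blkdiag l (Fmat n f) = 1\<^sub>m (l * n)"
  "blkdiag l (Fmat n f) * mat_adjoint (blkdiag l (Fmat n f)) = 1\<^sub>m (l * n)"
proof -
  show left: "mat_adjoint (blkdiag l (Fmat n f)) * blkdiag l (Fmat n f) = 1\<^sub>m (l * n)"
    by (simp add: mat_adjoint_blkdiag blkdiag_mult mat_adjoint_Fmat_mult blkdiag_one)
  show "blkdiag l (Fmat n f) * mat_adjoint (blkdiag l (Fmat n f)) = 1\<^sub>m (l * n)"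
    by (intro mat_mult_left_right_inverse[OF _ _ left]) auto
qed

lemma gram_unitary_mult:
  fixes U Y :: "complex mat"
  assumes U: "U \<in> carrier_mat n n" "mat_adjoint U * U = 1\<^sub>m n" and Y: "Y \<in> carrier_mat n k"
  shows "mat_adjoint (U * Y) * (U * Y) = mat_adjoint Y * Y"
proof -
  note dims = carrier_matD[OF U(1)] carrier_matD[OF Y]
  have "mat_adjoint (U * Y) * (U * Y) = mat_adjoint Y * ((mat_adjoint U * U) * Y)"
    using dims by (simp add: mat_adjoint_mult assoc_mult_mat')
  then show ?thesis
    using U(2) dims by simp
qed

lemma congruence_unitary_mult_add_one:
  fixes U Y Sig :: "complex mat"
  assumes U: "U \<in> carrier_mat n n" "U * mat_adjoint U = 1\<^sub>m n"
    and Y: "Y \<in> carrier_mat n k" and Sig: "Sig \<in> carrier_mat k k"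
  shows "(U * Y) * Sig * mat_adjoint (U * Y) + 1\<^sub>m n = U * (Y * Sig * mat_adjoint Y + 1\<^sub>m n) * mat_adjoint U"
  using U carrier_matD[OF U(1)] carrier_matD[OF Y] carrier_matD[OF Sig]
  by (simp add: mat_adjoint_mult assoc_mult_mat' mult_add_distrib_mat' add_mult_distrib_mat')

lemma det_unitary_similar:
  fixes U M :: "complex mat"
  assumes U: "U \<in> carrier_mat n n" "U * mat_adjoint U = 1\<^sub>m n" and M: "M \<in> carrier_mat n n"
  shows "det (U * M * mat_adjoint U) = det M"
proof -
  have UM: "U * M \<in> carrier_mat n n" and Uh: "mat_adjoint U \<in> carrier_mat n n"
    using U M by auto
  have "det (U * M * mat_adjoint U) = det M * (det U * det (mat_adjoint U))"
    using det_mult[OF UM Uh] det_mult[OF U(1) M] by simp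
  also have "det U * det (mat_adjoint U) = 1"
    using U(2) det_mult[OF U(1) Uh] by simp
  finally show ?thesis
    by simp
qed

section \<open>The linear Gaussian observation model\<close>

text \<open>
  For \<open>y = X h + n\<close> with \<open>h \<sim> CN(\<mu>, Sig)\<close> and \<open>n \<sim> CN(0, I)\<close> independent,
  \<open>obs_cov\<close> is the covariance of \<open>y\<close> and \<open>post_cov\<close> the posterior covariance of \<open>h\<close> given \<open>y\<close>.
\<close>

locale linear_gaussian_model =
  fixes m d :: nat and X Sig :: "complex mat"
  assumes X_carrier[simp]: "X \<in> carrier_mat m d" and Sig_herm_pd: "herm_pd d Sig"
begin

definition obs_cov :: "complex mat" where
  "obs_cov = X * Sig * mat_adjoint X + 1\<^sub>m m"

definition post_cov :: "complex mat" where
  "post_cov = minv (mat_adjoint X * X + minv Sig)"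

lemma post_prec_herm_pd: "herm_pd d (mat_adjoint X * X + minv Sig)"
  by (rule herm_pd_add_gram[OF herm_pd_minv[OF Sig_herm_pd] X_carrier])

lemma post_cov_herm_pd: "herm_pd d post_cov"
  unfolding post_cov_def by (rule herm_pd_minv[OF post_prec_herm_pd])

lemma obs_cov_herm_pd: "herm_pd m obs_cov"
  unfolding obs_cov_def by (rule herm_pd_congruence_add_one[OF Sig_herm_pd X_carrier])

lemma model_dims[simp]:
  "dim_row X = m" "dim_col X = d" "dim_row Sig = d" "dim_col Sig = d"
  "dim_row (minv Sig) = d" "dim_col (minv Sig) = d" "dim_row post_cov = d" "dim_col post_cov = d"
  using carrier_matD[OF X_carrier] carrier_matD[OF herm_pd_carrier[OF Sig_herm_pd]]
    carrier_matD[OF herm_pd_carrier[OF herm_pd_minv[OF Sig_herm_pd]]]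
    carrier_matD[OF herm_pd_carrier[OF post_cov_herm_pd]]
  by simp_all

lemma minv_obs_cov_woodbury: "minv obs_cov = 1\<^sub>m m - X * post_cov * mat_adjoint X"
proof -
  let ?G = "mat_adjoint X * X" and ?A = post_cov
  have Sig_inv: "Sig * minv Sig = 1\<^sub>m d"
    by (rule herm_pd_mult_minv[OF Sig_herm_pd])
  have prec_inv: "(?G + minv Sig) * ?A = 1\<^sub>m d"
    unfolding post_cov_def by (rule herm_pd_mult_minv[OF post_prec_herm_pd])
  have "Sig * (?G * ?A) + ?A = Sig * (?G * ?A) + Sig * (minv Sig * ?A)"
    using Sig_inv by (simp add: assoc_mult_mat'[symmetric])
  also have "\<dots> = Sig * ((?G + minv Sig) * ?A)"
    by (simp add: mult_add_distrib_mat' add_mult_distrib_mat')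
  finally have key: "Sig * (?G * ?A) + ?A = Sig"
    using prec_inv by simp
  have "obs_cov * (X * ?A * mat_adjoint X) = X * ((Sig * (?G * ?A) + ?A) * mat_adjoint X)"
    unfolding obs_cov_def
    by (simp add: assoc_mult_mat' mult_add_distrib_mat' add_mult_distrib_mat')
  also have "\<dots> = X * Sig * mat_adjoint X"
    unfolding key by (simp add: assoc_mult_mat')
  finally have "obs_cov * (1\<^sub>m m - X * ?A * mat_adjoint X) = 1\<^sub>m m"
    by (simp add: mult_minus_distrib_mat' obs_cov_def) (rule eq_matI; simp)
  then show ?thesis
    using herm_pd_carrier[OF obs_cov_herm_pd] by (intro minv_eqI) auto
qed

lemma obs_quadratic_form_eq:
  assumes mu: "mu \<in> carrier_vec d" and y: "y \<in> carrier_vec m"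
  defines "z \<equiv> mat_adjoint X *\<^sub>v y" and "u \<equiv> (mat_adjoint X * X) *\<^sub>v mu"
  shows "Re ((minv obs_cov *\<^sub>v (y - X *\<^sub>v mu)) \<bullet>c (y - X *\<^sub>v mu))
       = Re (y \<bullet>c y) + Re (mu \<bullet>c u) - Re ((post_cov *\<^sub>v u) \<bullet>c u)
         - (2 * Re (z \<bullet>c (mu - post_cov *\<^sub>v u)) + Re ((post_cov *\<^sub>v z) \<bullet>c z))"
proof -
  note A = herm_pd_carrier[OF post_cov_herm_pd] herm_pd_hermitian[OF post_cov_herm_pd]
  define r where "r = y - X *\<^sub>v mu"
  have r: "r \<in> carrier_vec m"
    using y by (simp add: r_def)
  have z: "z \<in> carrier_vec d" and u: "u \<in> carrier_vec d"
    by (simp_all add: z_def u_def)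
  have Xmu: "(X *\<^sub>v mu) \<bullet>c y = mu \<bullet>c z"
    using mu y by (simp add: z_def cscalar_prod_mat_adjoint[of X m d])
  have "(X *\<^sub>v mu) \<bullet>c (X *\<^sub>v mu) = mu \<bullet>c u"
    using mu by (simp add: u_def cscalar_prod_mat_adjoint[of X m d] assoc_mult_mat_vec')
  then have rr: "Re (r \<bullet>c r) = Re (y \<bullet>c y) - 2 * Re (mu \<bullet>c z) + Re (mu \<bullet>c u)"
    using Re_hermitian_form_diff[of "1\<^sub>m m" m y "X *\<^sub>v mu"] mu y Xmu by (simp add: r_def)
  have w: "mat_adjoint X *\<^sub>v r = z - u"
    using mu y by (simp add: r_def z_def u_def mult_minus_distrib_mat_vec[of _ d m] assoc_mult_mat_vec')
  have "minv obs_cov *\<^sub>v r = 1\<^sub>m m *\<^sub>v r - (X * post_cov * mat_adjoint X) *\<^sub>v r"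
    unfolding minv_obs_cov_woodbury using r by (intro minus_mult_distrib_mat_vec) (auto intro!: carrier_matI)
  also have "\<dots> = r - X *\<^sub>v (post_cov *\<^sub>v (z - u))"
    using r by (simp add: assoc_mult_mat_vec' w[symmetric])
  finally have "minv obs_cov *\<^sub>v r = r - X *\<^sub>v (post_cov *\<^sub>v (z - u))" .
  then have "(minv obs_cov *\<^sub>v r) \<bullet>c r = r \<bullet>c r - (post_cov *\<^sub>v (z - u)) \<bullet>c (z - u)"
    using r z u by (simp add: minus_cscalar_prod_distrib[of _ m] cscalar_prod_mat_adjoint[of X m d] w)
  moreover have "Re ((post_cov *\<^sub>v (z - u)) \<bullet>c (z - u))
      = Re ((post_cov *\<^sub>v z) \<bullet>c z) - 2 * Re ((post_cov *\<^sub>v u) \<bullet>c z) + Re ((post_cov *\<^sub>v u) \<bullet>c u)"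
    by (rule Re_hermitian_form_diff[OF A z u])
  moreover have "Re (z \<bullet>c (mu - post_cov *\<^sub>v u)) = Re (mu \<bullet>c z) - Re ((post_cov *\<^sub>v u) \<bullet>c z)"
    using mu z u by (simp add: cscalar_prod_minus_distrib[of _ d] Re_cscalar_prod_swap[of z])
  ultimately show ?thesis
    using rr by (simp add: r_def)
qed

lemma cn_density_obs_cov:
  assumes mu: "mu \<in> carrier_vec d" and y: "y \<in> carrier_vec m"
  defines "z \<equiv> mat_adjoint X *\<^sub>v y" and "u \<equiv> (mat_adjoint X * X) *\<^sub>v mu"
  shows "cn_density (X *\<^sub>v mu) obs_cov y
       = exp (- (Re (y \<bullet>c y) + Re (mu \<bullet>c u) - Re ((post_cov *\<^sub>v u) \<bullet>c u))) / (pi ^ m * Re (det obs_cov))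
         * exp (2 * Re (z \<bullet>c (mu - post_cov *\<^sub>v u)) + Re ((post_cov *\<^sub>v z) \<bullet>c z))"
proof -
  have exp_split: "exp (- (K - g)) / D = exp (- K) / D * exp g" for K g D :: real
    by (simp add: exp_diff exp_minus field_simps)
  have "dim_vec y = m"
    using y by simp
  then show ?thesis
    unfolding cn_density_def obs_quadratic_form_eq[OF mu y] z_def u_def by (simp only: exp_split)
qed

end

section \<open>The MIMO model with frequency offset\<close>

lemma Xmat_carrier[simp]: "S \<in> carrier_mat n lt \<Longrightarrow> Xmat S f \<in> carrier_mat n lt"
  by (auto simp: Xmat_def)

lemma blkdiag_Xmat:
  "S \<in> carrier_mat n lt \<Longrightarrow> blkdiag lr (Xmat S f) = blkdiag lr (Fmat n f) * blkdiag lr S"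
  by (simp add: Xmat_def blkdiag_mult)

lemma gram_blkdiag_Xmat:
  assumes S: "S \<in> carrier_mat n lt"
  shows "mat_adjoint (blkdiag lr (Xmat S f)) * blkdiag lr (Xmat S f) = mat_adjoint (blkdiag lr S) * blkdiag lr S"
  unfolding blkdiag_Xmat[OF S] using S
  by (intro gram_unitary_mult[OF _ unitary_blkdiag_Fmat(1)]) auto

lemma linear_gaussian_model_blkdiag_Xmat:
  assumes "S \<in> carrier_mat n lt" and "herm_pd (lr * lt) Sig"
  shows "linear_gaussian_model (lr * n) (lr * lt) (blkdiag lr (Xmat S f)) Sig"
  using assms by unfold_locales simp_all

lemma lik_conv_cn_density:
  assumes S: "S \<in> carrier_mat n lt" and Sig: "herm_pd (lr * lt) Sig"
  shows "lik lr S muh Sig y f = cn_density (blkdiag lr (Xmat S f) *\<^sub>v muh)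
    (linear_gaussian_model.obs_cov (lr * n) (blkdiag lr (Xmat S f)) Sig) y"
  unfolding linear_gaussian_model.obs_cov_def[OF linear_gaussian_model_blkdiag_Xmat[OF S Sig]]
  using carrier_matD[OF S] by (simp add: lik_def Let_def)

lemma post_cov_blkdiag_Xmat:
  assumes S: "S \<in> carrier_mat n lt" and Sig: "herm_pd (lr * lt) Sig"
  shows "linear_gaussian_model.post_cov (blkdiag lr (Xmat S f)) Sig = Amat lr S Sig"
  unfolding linear_gaussian_model.post_cov_def[OF linear_gaussian_model_blkdiag_Xmat[OF S Sig]]
  by (simp add: gram_blkdiag_Xmat[OF S] Amat_def)

lemma det_obs_cov_blkdiag_Xmat:
  assumes S: "S \<in> carrier_mat n lt" and Sig: "herm_pd (lr * lt) Sig"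
  shows "det (linear_gaussian_model.obs_cov (lr * n) (blkdiag lr (Xmat S f)) Sig)
       = det (blkdiag lr S * Sig * mat_adjoint (blkdiag lr S) + 1\<^sub>m (lr * n))"
proof -
  let ?D = "blkdiag lr (Fmat n f)"
  have D: "?D \<in> carrier_mat (lr * n) (lr * n)"
    by simp
  have "linear_gaussian_model.obs_cov (lr * n) (blkdiag lr (Xmat S f)) Sig
      = ?D * (blkdiag lr S * Sig * mat_adjoint (blkdiag lr S) + 1\<^sub>m (lr * n)) * mat_adjoint ?D"
    unfolding linear_gaussian_model.obs_cov_def[OF linear_gaussian_model_blkdiag_Xmat[OF S Sig]]
    unfolding blkdiag_Xmat[OF S]
    using S herm_pd_carrier[OF Sig]
    by (intro congruence_unitary_mult_add_one[OF D unitary_blkdiag_Fmat(2)]) auto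
  also have "det \<dots> = det (blkdiag lr S * Sig * mat_adjoint (blkdiag lr S) + 1\<^sub>m (lr * n))"
    using S herm_pd_carrier[OF Sig]
    by (intro det_unitary_similar[OF D unitary_blkdiag_Fmat(2)]) (auto intro!: carrier_matI)
  finally show ?thesis .
qed

lemma bvec_conv_gram:
  assumes "S \<in> carrier_mat n lt"
  shows "bvec lr S muh Sig f
     = (1\<^sub>m (lr * lt) - Amat lr S Sig * (mat_adjoint (blkdiag lr S) * blkdiag lr S)) *\<^sub>v muh"
  using assms carrier_matD[OF assms] by (simp add: bvec_def gram_blkdiag_Xmat)

lemma bvec_conv_minus:
  assumes S: "S \<in> carrier_mat n lt" and Sig: "herm_pd (lr * lt) Sig"
    and muh: "muh \<in> carrier_vec (lr * lt)"
  shows "bvec lr S muh Sig f = muh - Amat lr S Sig *\<^sub>v ((mat_adjoint (blkdiag lr S) * blkdiag lr S) *\<^sub>v muh)"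
proof -
  let ?G = "mat_adjoint (blkdiag lr S) * blkdiag lr S"
  have A: "Amat lr S Sig \<in> carrier_mat (lr * lt) (lr * lt)"
    using herm_pd_carrier[OF linear_gaussian_model.post_cov_herm_pd[OF linear_gaussian_model_blkdiag_Xmat[OF S Sig]]]
    by (simp add: post_cov_blkdiag_Xmat[OF S Sig])
  have G: "?G \<in> carrier_mat (lr * lt) (lr * lt)"
    using S by auto
  have "bvec lr S muh Sig f = 1\<^sub>m (lr * lt) *\<^sub>v muh - (Amat lr S Sig * ?G) *\<^sub>v muh"
    unfolding bvec_conv_gram[OF S] using A G muh by (intro minus_mult_distrib_mat_vec) auto
  also have "\<dots> = muh - Amat lr S Sig *\<^sub>v (?G *\<^sub>v muh)"
    by (simp only: one_mult_mat_vec[OF muh] assoc_mult_mat_vec[OF A G muh])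
  finally show ?thesis .
qed

lemma Amat_scalar_gram:
  assumes S: "S \<in> carrier_mat n lt" and Sig: "herm_pd (lr * lt) Sig"
    and gram: "mat_adjoint S * S = c \<cdot>\<^sub>m 1\<^sub>m lt"
  shows "Amat lr S Sig = minv (minv Sig + c \<cdot>\<^sub>m 1\<^sub>m (lr * lt))"
proof -
  have "mat_adjoint (blkdiag lr S) * blkdiag lr S = c \<cdot>\<^sub>m 1\<^sub>m (lr * lt)"
    using S by (simp add: mat_adjoint_blkdiag blkdiag_mult gram blkdiag_smult blkdiag_one)
  then show ?thesis
    unfolding Amat_def using herm_pd_carrier[OF herm_pd_minv[OF Sig]]
    by (simp add: comm_add_mat[of _ "lr * lt" "lr * lt"])
qed

lemma gfun_zero:
  "gfun lr S muh Sig 0 muf y f =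
    (let z = mat_adjoint (blkdiag lr (Xmat S f)) *\<^sub>v y in
     2 * Re (z \<bullet>c bvec lr S muh Sig f) + Re ((Amat lr S Sig *\<^sub>v z) \<bullet>c z))"
  unfolding gfun_def Let_def by simp

lemma lik_exp_gfun:
  assumes S: "S \<in> carrier_mat n lt" and Sig: "herm_pd (lr * lt) Sig"
    and muh: "muh \<in> carrier_vec (lr * lt)" and y: "y \<in> carrier_vec (lr * n)"
  obtains c where "0 < c" "\<And>f. lik lr S muh Sig y f = c * exp (gfun lr S muh Sig 0 muf y f)"
proof (rule that)
  let ?Sg = "blkdiag lr S"
  let ?u = "(mat_adjoint ?Sg * ?Sg) *\<^sub>v muh"
  let ?K = "Re (y \<bullet>c y) + Re (muh \<bullet>c ?u) - Re ((Amat lr S Sig *\<^sub>v ?u) \<bullet>c ?u)"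
  let ?C = "?Sg * Sig * mat_adjoint ?Sg + 1\<^sub>m (lr * n)"
  have "?Sg \<in> carrier_mat (lr * n) (lr * lt)"
    using S by simp
  then have "0 < Re (det ?C)"
    by (rule herm_pd_det_pos[OF herm_pd_congruence_add_one[OF Sig]])
  then show "0 < exp (- ?K) / (pi ^ (lr * n) * Re (det ?C))"
    by simp
  fix f
  let ?X = "blkdiag lr (Xmat S f)"
  have "lik lr S muh Sig y f = cn_density (?X *\<^sub>v muh) (linear_gaussian_model.obs_cov (lr * n) ?X Sig) y"
    by (rule lik_conv_cn_density[OF S Sig])
  also have "\<dots> = exp (- ?K) / (pi ^ (lr * n) * Re (det ?C)) * exp (gfun lr S muh Sig 0 muf y f)"
    unfolding linear_gaussian_model.cn_density_obs_cov[OF linear_gaussian_model_blkdiag_Xmat[OF S Sig] muh y]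
      gram_blkdiag_Xmat[OF S] post_cov_blkdiag_Xmat[OF S Sig] det_obs_cov_blkdiag_Xmat[OF S Sig]
      gfun_zero Let_def bvec_conv_minus[OF S Sig muh]
    by (rule refl)
  finally show "lik lr S muh Sig y f = exp (- ?K) / (pi ^ (lr * n) * Re (det ?C)) * exp (gfun lr S muh Sig 0 muf y f)" .
qed

lemma gfun_conv_gfun_zero: "gfun lr S muh Sig tau muf y f = gfun lr S muh Sig 0 muf y f - tau / 2 * (f - muf)\<^sup>2"
  unfolding gfun_def Let_def by simp

lemma exp_gfun_mult_normal_pdf:
  "exp (gfun lr S muh Sig 0 mu y f) * normal_pdf mu s f
     = exp (gfun lr S muh Sig (1 / s\<^sup>2) mu y f) / sqrt (2 * pi * s\<^sup>2)"
proof -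
  have "exp (g - 1 / s\<^sup>2 / 2 * a) = exp g * exp (- a / (2 * s\<^sup>2))" for g a :: real
    by (simp add: exp_add[symmetric])
  then show ?thesis
    unfolding normal_pdf_def gfun_conv_gfun_zero[where tau = "1 / s\<^sup>2"] by simp
qed

lemma argmax_set_mult_exp: "0 < c \<Longrightarrow> argmax_set (\<lambda>x. c * exp (h x)) = argmax_set h"
  by (simp add: argmax_set_def)

theorem theorem1:
  fixes lt lr n :: nat and S Sig :: "complex mat" and muh y :: "complex vec"
    and muf sigf :: real
  assumes "lt \<ge> 1" "lr \<ge> 1" "n \<ge> 1"
    and "S \<in> carrier_mat n lt"
    and "herm_pd (lr * lt) Sig"
    and "muh \<in> carrier_vec (lr * lt)"
    and "sigf > 0"
    and "y \<in> carrier_vec (lr * n)"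
  shows
    "argmax_set (\<lambda>f. lik lr S muh Sig y f * normal_pdf muf sigf f)
       = argmax_set (gfun lr S muh Sig (1 / sigf\<^sup>2) muf y)
     \<and> (\<forall>f. bvec lr S muh Sig f
           = (1\<^sub>m (lr * lt) - Amat lr S Sig * (mat_adjoint (blkdiag lr S) * blkdiag lr S)) *\<^sub>v muh)
     \<and> (let rho = (\<Sum>i<lt. (mat_adjoint S * S) $$ (i,i)) / of_nat n in
         mat_adjoint S * S = (of_nat n * rho / of_nat lt) \<cdot>\<^sub>m 1\<^sub>m lt \<longrightarrow>
         Amat lr S Sig = minv (minv Sig + (of_nat n * rho / of_nat lt) \<cdot>\<^sub>m 1\<^sub>m (lr * lt)))
     \<and> argmax_set (lik lr S muh Sig y) = argmax_set (gfun lr S muh Sig 0 muf y)"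
proof -
  obtain c where "0 < c" and lik: "\<And>f. lik lr S muh Sig y f = c * exp (gfun lr S muh Sig 0 muf y f)"
    using lik_exp_gfun[OF assms(4,5,6,8)] by blast
  have "(\<lambda>f. lik lr S muh Sig y f * normal_pdf muf sigf f)
      = (\<lambda>f. c / sqrt (2 * pi * sigf\<^sup>2) * exp (gfun lr S muh Sig (1 / sigf\<^sup>2) muf y f))"
    by (simp add: lik mult.assoc exp_gfun_mult_normal_pdf)
  then have "argmax_set (\<lambda>f. lik lr S muh Sig y f * normal_pdf muf sigf f)
      = argmax_set (gfun lr S muh Sig (1 / sigf\<^sup>2) muf y)"
    using \<open>0 < c\<close> \<open>sigf > 0\<close> argmax_set_mult_exp[of "c / sqrt (2 * pi * sigf\<^sup>2)"] by simp
  moreover have "lik lr S muh Sig y = (\<lambda>f. c * exp (gfun lr S muh Sig 0 muf y f))"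
    by (rule ext) (rule lik)
  then have "argmax_set (lik lr S muh Sig y) = argmax_set (gfun lr S muh Sig 0 muf y)"
    using argmax_set_mult_exp[OF \<open>0 < c\<close>] by simp
  ultimately show ?thesis
    unfolding Let_def using bvec_conv_gram[OF assms(4)] Amat_scalar_gram[OF assms(4,5)] by blast
qed

end
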